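(* Let $m\ge4$, $a\in Q\otimes V^{\otimes m-4}\otimes Q$ and $b\in V^{\otimes m-2}$. Assume that there exists $p\ge1$ such that $|a\,\omega_0^l+b\,\omega_0^{l+1}|=0$ for all $l\ge p$. Then $a=0$.
   Context: $\mathbb{K}$ is a field of characteristic zero and $V$ a symplectic $\mathbb{K}$-vector space of dimension $2g$ with symplectic basis $a_1,\ldots,a_g,b_1,\ldots,b_g$; $\omega_0=\sum_{i=1}^g(a_i\otimes b_i-b_i\otimes a_i)\in V^{\otimes2}$ represents the symplectic form. $C\colon V^{\otimes2}\to\mathbb{K}$ is the non-degenerate pairing given by the symplectic form, $C(a_i\otimes b_j)=\delta_{ij}$, $C(b_i\otimes a_j)=-\delta_{ij}$, $C(a_i\otimes a_j)=C(b_i\otimes b_j)=0$ (so $C(\omega_0)=2g$), and $Q=\ker C\subset V^{\otimes 2}$. $T(V)$ is the tensor algebra and $|x|$ denotes the class of $x$ in $T(V)/[T(V),T(V)]$. *)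

theory Defs
  imports Main
begin

text \<open>Tensor algebra T(V) of the symplectic space V with symplectic basis
  a_i = (i, True), b_i = (i, False), i ranging over the finite type 'i (so g = CARD('i)).
  A tensor is a function from words in the basis letters to the coefficient field;
  the word [l1,...,ln] stands for the basis tensor l1 (x) ... (x) ln.\<close>

type_synonym ('i, 'k) tens = "('i \<times> bool) list \<Rightarrow> 'k"

definition finsupp :: "('i, 'k::zero) tens \<Rightarrow> bool" where
  "finsupp x \<longleftrightarrow> finite {w. x w \<noteq> 0}"

definition hom :: "nat \<Rightarrow> ('i, 'k::zero) tens set" where
  "hom n = {x. \<forall>w. length w \<noteq> n \<longrightarrow> x w = 0}"

definition tmul :: "('i, 'k::comm_ring_1) tens \<Rightarrow> ('i, 'k) tens \<Rightarrow> ('i, 'k) tens" where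
  "tmul x y = (\<lambda>w. \<Sum>k\<in>{0..length w}. x (take k w) * y (drop k w))"

definition tone :: "('i, 'k::comm_ring_1) tens" where
  "tone = (\<lambda>w. if w = [] then 1 else 0)"

primrec tpow :: "('i, 'k::comm_ring_1) tens \<Rightarrow> nat \<Rightarrow> ('i, 'k) tens" where
  "tpow x 0 = tone"
| "tpow x (Suc n) = tmul (tpow x n) x"

inductive_set kspan :: "('i, 'k::comm_ring_1) tens set \<Rightarrow> ('i, 'k) tens set"
  for S where
  zero: "(\<lambda>w. 0) \<in> kspan S"
| add: "x \<in> S \<Longrightarrow> y \<in> kspan S \<Longrightarrow> (\<lambda>w. c * x w + y w) \<in> kspan S"

definition omega0 :: "('i::finite, 'k::comm_ring_1) tens" where
  "omega0 = (\<lambda>w. if (\<exists>i. w = [(i, True), (i, False)]) then 1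
                 else if (\<exists>i. w = [(i, False), (i, True)]) then -1 else 0)"

definition Cpair :: "('i::finite, 'k::comm_ring_1) tens \<Rightarrow> 'k" where
  "Cpair x = (\<Sum>i\<in>UNIV. x [(i, True), (i, False)] - x [(i, False), (i, True)])"

definition Qsp :: "('i::finite, 'k::comm_ring_1) tens set" where
  "Qsp = {x \<in> hom 2. Cpair x = 0}"

definition QVQ :: "nat \<Rightarrow> ('i::finite, 'k::comm_ring_1) tens set" where
  "QVQ m = kspan {tmul (tmul q v) q' | q v q'. q \<in> Qsp \<and> v \<in> hom (m - 4) \<and> q' \<in> Qsp}"

text \<open>The commutator subspace [T(V), T(V)]; |x| = 0 iff x lies in it.\<close>
definition commsp :: "('i, 'k::comm_ring_1) tens set" where
  "commsp = kspan {(\<lambda>w. tmul u v w - tmul v u w) | u v. finsupp u \<and> finsupp v}"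

definition cyc_zero :: "('i, 'k::comm_ring_1) tens \<Rightarrow> bool" where
  "cyc_zero x \<longleftrightarrow> x \<in> commsp"

end

theory Submission
  imports Defs
begin

text \<open>A linear form on V^(\<otimes>n) vanishes on commutators as soon as it is invariant under cyclic
  rotation of words, so x = a omega0^(2k) + b omega0^(2k+1) has vanishing cyclic sums of
  coefficients for large k. To see a(u) = 0 for u = u1 mid u2 with u1, u2 of length 2, test
  this on the words p1 mid p2 (a_i b_i b_i a_i)^k and project p1, p2 onto Q at u1, u2. In a
  nontrivial rotation, either p1 or p2 is paired with omega0, which the projection
  annihilates, or omega0 meets a letter pair b_i b_i or a_i a_i of the test word. The trivial
  rotation of the a-part gives (-1)^k a(u1 mid u2), because a lies in Q at both ends.\<close>

lemma tmul_hom_left: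
  assumes "x \<in> hom k"
  shows "tmul x y w = (if k \<le> length w then x (take k w) * y (drop k w) else 0)"
proof -
  have "tmul x y w = (\<Sum>i\<in>{0..length w}. if i = k then x (take i w) * y (drop i w) else 0)"
    unfolding tmul_def by (rule sum.cong) (use assms in \<open>auto simp: hom_def\<close>)
  then show ?thesis
    by (simp add: sum.delta)
qed

lemma tmul_hom_right:
  assumes "y \<in> hom k"
  shows "tmul x y w =
    (if k \<le> length w then x (take (length w - k) w) * y (drop (length w - k) w) else 0)"
proof -
  have "tmul x y w = (\<Sum>i\<in>{0..length w}.
      if i = length w - k \<and> k \<le> length w then x (take i w) * y (drop i w) else 0)"
    unfolding tmul_def by (rule sum.cong) (use assms in \<open>auto simp: hom_def\<close>)
  then show ?thesis
    by (cases "k \<le> length w") (simp_all add: sum.delta)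
qed

lemma tmul_in_hom: "x \<in> hom i \<Longrightarrow> y \<in> hom j \<Longrightarrow> tmul x y \<in> hom (i + j)"
  unfolding hom_def[of "i + j"] by (auto simp: tmul_hom_left hom_def)

lemma tmul_assoc: "tmul (tmul x y) z = tmul x (tmul y z)"
proof
  fix w :: "('a \<times> bool) list"
  define n where "n = length w"
  define g where "g = (\<lambda>j i. x (take j w) * y (take i (drop j w)) * z (drop (j + i) w))"
  have "tmul x (tmul y z) w = (\<Sum>j\<le>n. \<Sum>i\<le>n - j. g j i)"
    by (simp add: tmul_def g_def n_def atLeast0AtMost sum_distrib_left mult.assoc add.commute)
  also have "\<dots> = (\<Sum>(j, i)\<in>{(j, i). j + i \<le> n}. g j i)"
    by (subst sum.Sigma) (auto intro!: sum.cong)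
  also have "\<dots> = (\<Sum>k\<le>n. \<Sum>j\<le>k. g j (k - j))"
    by (rule sum.triangle_reindex_eq)
  also have "\<dots> = tmul (tmul x y) z w"
    by (auto simp: tmul_def g_def n_def atLeast0AtMost sum_distrib_right drop_take intro!: sum.cong)
  finally show "tmul (tmul x y) z w = tmul x (tmul y z) w" ..
qed

lemma omega0_in_hom: "omega0 \<in> hom 2"
  by (auto simp: hom_def omega0_def)

fun omega_coeff :: "('i::finite \<times> bool) list \<Rightarrow> 'k::comm_ring_1" where
  "omega_coeff [] = 1"
| "omega_coeff [_] = 0"
| "omega_coeff (x # y # w) = omega0 [x, y] * omega_coeff w"

lemma omega_coeff_append:
  "even (length u) \<Longrightarrow> omega_coeff (u @ v) = omega_coeff u * omega_coeff v"
  by (induction u rule: omega_coeff.induct) (auto simp: algebra_simps)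

lemma omega_coeff_append_pair:
  assumes "even (length u)" "length p = 2"
  shows "omega_coeff (u @ p @ v) = omega_coeff u * omega0 p * omega_coeff v"
proof -
  obtain x y where "p = [x, y]"
    using assms(2) by (auto simp: length_Suc_conv numeral_2_eq_2)
  then show ?thesis
    using omega_coeff_append[OF assms(1), of "p @ v"] by (simp add: mult.assoc)
qed

lemma omega_coeff_zero_pair:
  assumes "even (length u)" "(omega0 [x, y] :: 'k::comm_ring_1) = 0"
  shows "(omega_coeff (u @ x # y # v) :: 'k) = 0"
proof -
  have "omega_coeff (u @ [x, y] @ v) = omega_coeff u * (omega0 [x, y] :: 'k) * omega_coeff v"
    by (rule omega_coeff_append_pair) (use assms in auto)
  then show ?thesis
    using assms(2) by simp
qed

lemma tpow_omega0:
  "tpow (omega0 :: ('i::finite, 'k::comm_ring_1) tens) l w =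
    (if length w = 2 * l then omega_coeff w else 0)"
proof (induction l arbitrary: w)
  case 0
  then show ?case
    by (cases w) (auto simp: tone_def)
next
  case (Suc l)
  have "(tpow omega0 (Suc l) w :: 'k) =
      (if 2 \<le> length w then tpow omega0 l (take (length w - 2) w) * omega0 (drop (length w - 2) w)
       else 0)"
    by (simp add: tmul_hom_right[OF omega0_in_hom])
  also have "\<dots> = (if length w = 2 * Suc l
      then omega_coeff (take (length w - 2) w) * omega0 (drop (length w - 2) w) else 0)"
    by (simp only: Suc.IH) auto
  also have "\<dots> = (if length w = 2 * Suc l then omega_coeff w else 0)"
  proof -
    have "(omega_coeff w :: 'k) =
        omega_coeff (take (length w - 2) w) * omega0 (drop (length w - 2) w)"
      if "length w = 2 * Suc l"
      using omega_coeff_append_pair[of "take (length w - 2) w" "drop (length w - 2) w" "[]"] that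
      by simp
    then show ?thesis
      by simp
  qed
  finally show ?case .
qed

definition cyclic_sum :: "('i, 'k::comm_ring_1) tens \<Rightarrow> ('i \<times> bool) list \<Rightarrow> 'k" where
  "cyclic_sum x w = (\<Sum>s<length w. x (rotate s w))"

lemma rotate_eq_drop_take: "s \<le> length w \<Longrightarrow> rotate s w = drop s w @ take s w"
  using rotate_append[of "take s w" "drop s w"] by simp

lemma cyclic_sum_add: "cyclic_sum (\<lambda>w. x w + y w) z = cyclic_sum x z + cyclic_sum y z"
  by (simp add: cyclic_sum_def sum.distrib)

lemma cyclic_sum_commutator:
  fixes u v :: "('i, 'k::comm_ring_1) tens"
  shows "cyclic_sum (\<lambda>z. tmul u v z - tmul v u z) w = 0"
proof -
  define n where "n = length w"
  define S where "S = {..<n} \<times> {0..n}"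
  define F where
    "F = (\<lambda>x y :: ('i, 'k) tens. \<lambda>(s, k). x (take k (rotate s w)) * y (drop k (rotate s w)))"
  have expand: "(\<Sum>s<n. tmul x y (rotate s w)) = sum (F x y) S" for x y
    by (simp add: S_def F_def tmul_def sum.cartesian_product n_def)
  \<comment> \<open>Splitting the s-th rotation at k is splitting the (s + k)-th rotation at n - k,
    with the two factors exchanged.\<close>
  define h where "h = (\<lambda>(s, k). ((s + k) mod n, n - k))"
  have "h (h a) = a" "h a \<in> S" "F u v (h a) = F v u a" if "a \<in> S" for a
  proof -
    obtain s k where a: "a = (s, k)" "s < n" "k \<le> n"
      using \<open>a \<in> S\<close> by (auto simp: S_def)
    have "((s + k) mod n + (n - k)) mod n = (s + k + (n - k)) mod n"
      by (simp add: mod_add_left_eq)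
    also have "\<dots> = s"
      using a by simp
    finally show "h (h a) = a"
      using a by (simp add: h_def)
    show "h a \<in> S"
      using a by (auto simp: S_def h_def)
    have "rotate ((s + k) mod n) w = rotate k (rotate s w)"
      by (metis n_def rotate_conv_mod rotate_rotate add.commute)
    also have "\<dots> = drop k (rotate s w) @ take k (rotate s w)"
      using a by (simp add: n_def rotate_eq_drop_take)
    finally show "F u v (h a) = F v u a"
      using a by (simp add: F_def h_def n_def mult.commute)
  qed
  then have "sum (F v u) S = sum (F u v) S"
    by (intro sum.reindex_bij_witness[where i = h and j = h]) auto
  then show ?thesis
    by (simp add: cyclic_sum_def sum_subtractf expand flip: n_def)
qed

lemma cyclic_sum_cyc_zero: "cyc_zero x \<Longrightarrow> cyclic_sum x w = 0"
  unfolding cyc_zero_def commsp_def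
proof (induction x rule: kspan.induct)
  case zero
  then show ?case
    by (simp add: cyclic_sum_def)
next
  case (add x y c)
  then obtain u v where "x = (\<lambda>w. tmul u v w - tmul v u w)"
    by auto
  then show ?case
    using add.IH cyclic_sum_commutator[of u v w]
    by (simp add: cyclic_sum_def sum.distrib flip: sum_distrib_left)
qed

definition words :: "nat \<Rightarrow> ('i \<times> bool) list set" where
  "words n = {w. length w = n}"

lemma finite_words: "finite (words n :: ('i::finite \<times> bool) list set)"
  using finite_lists_length_eq[of "UNIV :: ('i \<times> bool) set" n] by (simp add: words_def)

lemma in_words_2_iff: "p \<in> words 2 \<longleftrightarrow> (\<exists>x y. p = [x, y])"
  by (auto simp: words_def length_Suc_conv numeral_2_eq_2)

lemma sum_omega0_mult:
  "(\<Sum>p\<in>words 2. (omega0 p :: 'k::comm_ring_1) * f p) =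
    (\<Sum>i\<in>(UNIV :: 'i::finite set). f [(i, True), (i, False)] - f [(i, False), (i, True)])"
proof -
  define S1 where "S1 = (\<lambda>i::'i. [(i, True), (i, False)]) ` UNIV"
  define S2 where "S2 = (\<lambda>i::'i. [(i, False), (i, True)]) ` UNIV"
  have "(\<Sum>p\<in>words 2. (omega0 p :: 'k) * f p) = (\<Sum>p\<in>S1 \<union> S2. omega0 p * f p)"
    by (rule sum.mono_neutral_right[OF finite_words])
      (auto simp: S1_def S2_def words_def omega0_def)
  also have "\<dots> = (\<Sum>p\<in>S1. omega0 p * f p) + (\<Sum>p\<in>S2. omega0 p * f p)"
    by (rule sum.union_disjoint) (auto simp: S1_def S2_def)
  also have "(\<Sum>p\<in>S1. (omega0 p :: 'k) * f p) = (\<Sum>i\<in>UNIV. f [(i, True), (i, False)])"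
    unfolding S1_def by (subst sum.reindex) (auto simp: inj_def omega0_def)
  also have "(\<Sum>p\<in>S2. (omega0 p :: 'k) * f p) = (\<Sum>i\<in>UNIV. - f [(i, False), (i, True)])"
    unfolding S2_def by (subst sum.reindex) (auto simp: inj_def omega0_def)
  finally show ?thesis
    by (simp add: sum_subtractf sum_negf)
qed

lemma Cpair_eq_sum: "Cpair q = (\<Sum>p\<in>words 2. omega0 p * q p)"
  by (simp add: sum_omega0_mult Cpair_def)

lemma sum_omega0_square:
  "(\<Sum>p\<in>(words 2 :: ('i::finite \<times> bool) list set). omega0 p * (omega0 p :: 'k::comm_ring_1)) =
    of_nat (2 * card (UNIV :: 'i set))"
  by (subst sum_omega0_mult) (simp add: omega0_def)

text \<open>The matrix of the projection x \<mapsto> x - C(x)/(2g) omega0 of V \<otimes> V onto Q along omega0.\<close>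

definition projQ :: "('i::finite \<times> bool) list \<Rightarrow> ('i \<times> bool) list \<Rightarrow> 'k::field_char_0" where
  "projQ u p = (if u = p then 1 else 0) - omega0 u * omega0 p / of_nat (2 * card (UNIV :: 'i set))"

lemma sum_projQ_mult:
  fixes f :: "('i::finite \<times> bool) list \<Rightarrow> 'k::field_char_0"
  assumes "u \<in> words 2"
  shows "(\<Sum>p\<in>words 2. projQ u p * f p) =
    f u - omega0 u / of_nat (2 * card (UNIV :: 'i set)) * (\<Sum>p\<in>words 2. omega0 p * f p)"
proof -
  have "projQ u p * f p = (if u = p then f p else 0) -
      omega0 u / of_nat (2 * card (UNIV :: 'i set)) * (omega0 p * f p)" for p
    by (simp add: projQ_def left_diff_distrib)
  then show ?thesis
    using assms by (simp add: sum_subtractf sum.delta finite_words sum_distrib_left)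
qed

lemma sum_projQ_on_Q:
  fixes f :: "('i::finite \<times> bool) list \<Rightarrow> 'k::field_char_0"
  assumes "u \<in> words 2" "(\<Sum>p\<in>words 2. omega0 p * f p) = 0"
  shows "(\<Sum>p\<in>words 2. projQ u p * f p) = f u"
  using sum_projQ_mult[OF assms(1), of f] assms(2) by simp

lemma sum_projQ_omega0:
  fixes u :: "('i::finite \<times> bool) list"
  shows "(\<Sum>p\<in>words 2. projQ u p * omega0 p) = (0 :: 'k::field_char_0)"
proof (cases "u \<in> words 2")
  case True
  then show ?thesis
    using sum_projQ_mult[OF True, of "omega0 :: ('i, 'k) tens"] by (simp add: sum_omega0_square)
next
  case False
  then have "omega0 u = 0"
    by (auto simp: omega0_def words_def)
  with False show ?thesis
    by (auto simp: projQ_def intro!: sum.neutral)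
qed

definition proj_ends ::
  "('i::finite \<times> bool) list \<Rightarrow> ('i \<times> bool) list \<Rightarrow>
    (('i \<times> bool) list \<Rightarrow> ('i \<times> bool) list \<Rightarrow> 'k) \<Rightarrow> 'k::field_char_0" where
  "proj_ends u1 u2 G = (\<Sum>p1\<in>words 2. \<Sum>p2\<in>words 2. projQ u1 p1 * projQ u2 p2 * G p1 p2)"

lemma proj_ends_cong:
  "(\<And>p1 p2. p1 \<in> words 2 \<Longrightarrow> p2 \<in> words 2 \<Longrightarrow> G p1 p2 = G' p1 p2) \<Longrightarrow>
    proj_ends u1 u2 G = proj_ends u1 u2 G'"
  by (simp add: proj_ends_def)

lemma proj_ends_neutral:
  "(\<And>p1 p2. p1 \<in> words 2 \<Longrightarrow> p2 \<in> words 2 \<Longrightarrow> G p1 p2 = 0) \<Longrightarrow> proj_ends u1 u2 G = 0"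
  by (simp add: proj_ends_def)

lemma proj_ends_add:
  "proj_ends u1 u2 (\<lambda>p1 p2. G p1 p2 + H p1 p2) = proj_ends u1 u2 G + proj_ends u1 u2 H"
  by (simp add: proj_ends_def distrib_left sum.distrib)

lemma proj_ends_cmult: "proj_ends u1 u2 (\<lambda>p1 p2. c * G p1 p2) = c * proj_ends u1 u2 G"
  by (simp add: proj_ends_def sum_distrib_left mult_ac)

lemma proj_ends_sum:
  "proj_ends u1 u2 (\<lambda>p1 p2. \<Sum>s\<in>S. G s p1 p2) = (\<Sum>s\<in>S. proj_ends u1 u2 (G s))"
proof -
  have "proj_ends u1 u2 (\<lambda>p1 p2. \<Sum>s\<in>S. G s p1 p2) =
      (\<Sum>p1\<in>words 2. \<Sum>s\<in>S. \<Sum>p2\<in>words 2. projQ u1 p1 * projQ u2 p2 * G s p1 p2)"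
    unfolding proj_ends_def by (simp add: sum_distrib_left sum.swap[of _ S])
  then show ?thesis
    unfolding proj_ends_def by (simp add: sum.swap[of _ "words 2" S])
qed

lemma proj_ends_omega0_left:
  assumes "\<And>p1 p2. p1 \<in> words 2 \<Longrightarrow> p2 \<in> words 2 \<Longrightarrow> G p1 p2 = omega0 p1 * H p2"
  shows "proj_ends u1 u2 G = 0"
proof -
  have "proj_ends u1 u2 G =
      (\<Sum>p1\<in>words 2. projQ u1 p1 * omega0 p1) * (\<Sum>p2\<in>words 2. projQ u2 p2 * H p2)"
    unfolding proj_ends_def sum_product
    by (intro sum.cong refl) (simp add: assms algebra_simps)
  then show ?thesis
    by (simp add: sum_projQ_omega0)
qed

lemma proj_ends_omega0_right:
  assumes "\<And>p1 p2. p1 \<in> words 2 \<Longrightarrow> p2 \<in> words 2 \<Longrightarrow> G p1 p2 = H p1 * omega0 p2"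
  shows "proj_ends u1 u2 G = 0"
proof -
  have "proj_ends u1 u2 G =
      (\<Sum>p1\<in>words 2. projQ u1 p1 * H p1) * (\<Sum>p2\<in>words 2. projQ u2 p2 * omega0 p2)"
    unfolding proj_ends_def sum_product
    by (intro sum.cong refl) (simp add: assms algebra_simps)
  then show ?thesis
    by (simp add: sum_projQ_omega0)
qed

definition Q_at_ends :: "('i::finite, 'k::comm_ring_1) tens \<Rightarrow> bool" where
  "Q_at_ends x \<longleftrightarrow>
    (\<forall>v. (\<Sum>p\<in>words 2. omega0 p * x (p @ v)) = 0) \<and>
    (\<forall>v. (\<Sum>p\<in>words 2. omega0 p * x (v @ p)) = 0)"

lemma proj_ends_Q_at_ends:
  assumes "Q_at_ends x" "u1 \<in> words 2" "u2 \<in> words 2"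
  shows "proj_ends u1 u2 (\<lambda>p1 p2. x (p1 @ v @ p2)) = x (u1 @ v @ u2)"
proof -
  have "(\<Sum>p2\<in>words 2. projQ u2 p2 * x (p1 @ v @ p2)) = x (p1 @ v @ u2)" for p1
    by (rule sum_projQ_on_Q) (use assms in \<open>simp_all add: Q_at_ends_def flip: append_assoc\<close>)
  then have "proj_ends u1 u2 (\<lambda>p1 p2. x (p1 @ v @ p2)) =
      (\<Sum>p1\<in>words 2. projQ u1 p1 * x (p1 @ v @ u2))"
    by (simp add: proj_ends_def mult.assoc flip: sum_distrib_left)
  also have "\<dots> = x (u1 @ v @ u2)"
    by (rule sum_projQ_on_Q) (use assms in \<open>simp_all add: Q_at_ends_def\<close>)
  finally show ?thesis .
qed

lemma Q_at_ends_tmul: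
  assumes "q \<in> Qsp" "q' \<in> Qsp"
  shows "Q_at_ends (tmul (tmul q v) q')"
proof -
  have hom: "q \<in> hom 2" "q' \<in> hom 2" and C: "Cpair q = 0" "Cpair q' = 0"
    using assms by (auto simp: Qsp_def)
  have left: "tmul (tmul q v) q' (p @ r) = q p * tmul v q' r" if "p \<in> words 2" for p r
    using that by (simp add: tmul_assoc tmul_hom_left[OF hom(1)] words_def)
  have right: "tmul (tmul q v) q' (r @ p) = tmul q v r * q' p" if "p \<in> words 2" for p r
    using that by (simp add: tmul_hom_right[OF hom(2)] words_def)
  have "(\<Sum>p\<in>words 2. omega0 p * tmul (tmul q v) q' (p @ r)) =
      (\<Sum>p\<in>words 2. omega0 p * q p * tmul v q' r)" for r
    by (intro sum.cong refl) (simp add: left mult.assoc)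
  moreover have "(\<Sum>p\<in>words 2. omega0 p * tmul (tmul q v) q' (r @ p)) =
      (\<Sum>p\<in>words 2. omega0 p * q' p * tmul q v r)" for r
    by (intro sum.cong refl) (simp add: right mult_ac)
  ultimately show ?thesis
    using C by (simp add: Q_at_ends_def Cpair_eq_sum flip: sum_distrib_right)
qed

lemma QVQ_Q_at_ends: "a \<in> QVQ m \<Longrightarrow> Q_at_ends a"
  unfolding QVQ_def
proof (induction a rule: kspan.induct)
  case zero
  then show ?case
    by (simp add: Q_at_ends_def)
next
  case (add x y c)
  then have "Q_at_ends x"
    by (auto intro: Q_at_ends_tmul)
  with add.IH show ?case
    by (simp add: Q_at_ends_def sum.distrib algebra_simps flip: sum_distrib_left)
qed

lemma QVQ_in_hom:
  assumes "a \<in> QVQ m" "m \<ge> 4"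
  shows "a \<in> hom m"
  using assms(1) unfolding QVQ_def
proof (induction a rule: kspan.induct)
  case zero
  then show ?case
    by (simp add: hom_def)
next
  case (add x y c)
  then obtain q v q' where "x = tmul (tmul q v) q'" "q \<in> hom 2" "v \<in> hom (m - 4)" "q' \<in> hom 2"
    by (auto simp: Qsp_def)
  then have "x \<in> hom (2 + (m - 4) + 2)"
    by (blast intro: tmul_in_hom)
  with add.IH show ?case
    using assms(2) by (simp add: hom_def)
qed

text \<open>For an arbitrary index i, test_word k is (a_i b_i b_i a_i)^k: its letter pairs at even offsets
  are (a_i, b_i) or (b_i, a_i), while those at odd offsets are (b_i, b_i) or (a_i, a_i) and
  pair to zero with omega0.\<close>

definition test_letter :: "nat \<Rightarrow> 'i \<times> bool" where
  "test_letter j = (undefined, j mod 4 = 0 \<or> j mod 4 = 3)"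

definition test_word :: "nat \<Rightarrow> ('i \<times> bool) list" where
  "test_word k = map test_letter [0..<4 * k]"

lemma length_test_word [simp]: "length (test_word k) = 4 * k"
  by (simp add: test_word_def)

lemma omega0_test_letter_odd:
  "odd j \<Longrightarrow> (omega0 [test_letter j, test_letter (Suc j)] :: 'k::comm_ring_1) = 0"
  by (auto simp: test_letter_def omega0_def) presburger+

lemma omega_coeff_test_word:
  "(omega_coeff (test_word k :: ('i::finite \<times> bool) list) :: 'k::comm_ring_1) = (-1) ^ k"
proof (induction k)
  case 0
  then show ?case
    by (simp add: test_word_def)
next
  case (Suc k)
  have "(test_word (Suc k) :: ('i \<times> bool) list) = test_word k @
      [test_letter (4 * k), test_letter (4 * k + 1), test_letter (4 * k + 2),
       test_letter (4 * k + 3)]"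
    by (simp add: test_word_def numeral_eq_Suc)
  moreover have "(4 * k + 1) mod 4 = (1::nat)" "(4 * k + 2) mod 4 = (2::nat)"
    "(4 * k + 3) mod 4 = (3::nat)"
    by presburger+
  ultimately have "(omega_coeff (test_word (Suc k) :: ('i \<times> bool) list) :: 'k) =
      omega_coeff (test_word k :: ('i \<times> bool) list) * (1 * (-1 * 1))"
    by (simp add: omega_coeff_append omega0_def test_letter_def)
  then show ?case
    using Suc.IH by simp
qed

lemma drop_test_word: "j \<le> 4 * k \<Longrightarrow> drop j (test_word k) = map test_letter [j..<4 * k]"
  by (simp add: test_word_def drop_map)

lemma take_test_word: "t \<le> 4 * k \<Longrightarrow> take t (test_word k) = map test_letter [0..<t]"
  by (simp add: test_word_def take_map)

lemma omega_coeff_drop_test_word_odd: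
  assumes "odd j" "j + 2 \<le> 4 * k"
  shows "(omega_coeff (drop j (test_word k) @ z) :: 'k::comm_ring_1) = 0"
proof -
  have "[j..<4 * k] = j # Suc j # [j + 2..<4 * k]"
    using assms by (simp add: upt_conv_Cons)
  then have "drop j (test_word k) @ z =
      [] @ test_letter j # test_letter (Suc j) # map test_letter [j + 2..<4 * k] @ z"
    using assms by (simp add: drop_test_word)
  then show ?thesis
    by (simp only:) (rule omega_coeff_zero_pair[OF _ omega0_test_letter_odd[OF assms(1)]], simp)
qed

lemma omega_coeff_test_word_misaligned:
  assumes "odd (length y)" "3 \<le> t" "t \<le> 4 * k"
  shows "(omega_coeff (y @ take t (test_word k) @ z) :: 'k::comm_ring_1) = 0"
proof -
  have "[0..<t] = 0 # 1 # 2 # [3..<t]"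
    using assms by (simp add: upt_conv_Cons eval_nat_numeral)
  then have "y @ take t (test_word k) @ z =
      (y @ [test_letter 0]) @ test_letter 1 # test_letter (Suc 1) # map test_letter [3..<t] @ z"
    using assms by (simp add: take_test_word numeral_2_eq_2)
  then show ?thesis
    by (simp only:)
      (rule omega_coeff_zero_pair[OF _ omega0_test_letter_odd], use assms(1) in simp_all)
qed

definition window_term ::
  "nat \<Rightarrow> ('i::finite, 'k::comm_ring_1) tens \<Rightarrow> nat \<Rightarrow> ('i \<times> bool) list \<Rightarrow> 'k" where
  "window_term K f s w = f (take K (rotate s w)) * omega_coeff (drop K (rotate s w))"

lemma cyclic_sum_tmul_tpow_omega0:
  assumes "f \<in> hom K" "length w = K + 2 * l"
  shows "cyclic_sum (tmul f (tpow omega0 l)) w = (\<Sum>s<length w. window_term K f s w)"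
  using assms
  by (simp add: cyclic_sum_def window_term_def tmul_hom_left tpow_omega0 del: tpow.simps)

lemma window_term_split:
  assumes "w = v @ R" "length v = K + d" "d \<le> s" "s \<le> length R + d"
  shows "window_term K f s w = f (take K (drop s w)) * omega_coeff (drop (s - d) R @ take s w)"
proof -
  have "drop K (drop s w) = drop (K + s) (v @ R)"
    by (simp only: drop_drop assms(1))
  also have "\<dots> = drop (s - d) R"
    using assms by simp
  finally show ?thesis
    using assms by (simp add: window_term_def rotate_eq_drop_take del: drop_drop)
qed

lemma window_term_wrap:
  assumes "w = v @ R" "length v = K + d" "length v \<le> s" "length R + d \<le> s"
    "s < length v + length R"
  shows "window_term K f s w =
    f (drop (s - length v) R @ take (s - length R - d) v) *
    omega_coeff (drop (s - length R - d) v @ take (s - length v) R)"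
proof -
  have "rotate s w = drop (s - length v) R @ v @ take (s - length v) R"
    using assms by (simp add: rotate_eq_drop_take)
  moreover have "K - length (drop (s - length v) R) = s - length R - d"
    using assms by simp
  ultimately show ?thesis
    using assms(2,4) by (simp add: window_term_def)
qed

text \<open>The s-th window term of p1 @ mid @ p2 @ test_word k evaluates f on the K letters from
  position s on and pairs the remaining letters by omega0; here d = h + 4 - K is 0 for the a-part
  and 2 for the b-part. In each of the following lemmas either p1 or p2 is one of these pairs, and
  the projection onto Q kills it, or some pair sits at an odd offset of the test word and
  vanishes.\<close>

lemma proj_ends_window_through_test_word:
  fixes G :: "('i::finite \<times> bool) list \<Rightarrow> ('i \<times> bool) list \<Rightarrow> 'k::field_char_0"
  assumes "length mid = h" "length y + j \<le> h + 3" "3 \<le> t" "t \<le> 4 * k"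
    and G: "\<And>p1 p2. p1 \<in> words 2 \<Longrightarrow> p2 \<in> words 2 \<Longrightarrow>
      G p1 p2 = g (take j (p1 @ mid @ p2)) *
        omega_coeff (y @ drop j (p1 @ mid @ p2) @ take t (test_word k))"
  shows "proj_ends u1 u2 G = 0"
proof (cases "even (length y + (h + 4 - j))")
  case True
  then have j: "j \<le> h + 2"
    using assms(2) by presburger
  show ?thesis
  proof (rule proj_ends_omega0_right[where H = "\<lambda>p1. g (take j (p1 @ mid)) *
      omega_coeff (y @ drop j (p1 @ mid)) *
      omega_coeff (take t (test_word k :: ('i \<times> bool) list))"])
    fix p1 p2 :: "('i \<times> bool) list"
    assume p: "p1 \<in> words 2" "p2 \<in> words 2"
    then have len: "length p1 = 2" "length p2 = 2"
      by (auto simp: words_def)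
    have "even (length (y @ drop j (p1 @ mid)))"
      using True j len assms(1) by simp presburger
    then have "(omega_coeff ((y @ drop j (p1 @ mid)) @ p2 @ take t (test_word k)) :: 'k) =
        omega_coeff (y @ drop j (p1 @ mid)) * omega0 p2 *
          omega_coeff (take t (test_word k :: ('i \<times> bool) list))"
      using len(2) by (rule omega_coeff_append_pair)
    then show "G p1 p2 = g (take j (p1 @ mid)) * omega_coeff (y @ drop j (p1 @ mid)) *
        omega_coeff (take t (test_word k :: ('i \<times> bool) list)) * omega0 p2"
      using j len assms(1) G[OF p] by (simp add: mult_ac)
  qed
next
  case False
  show ?thesis
  proof (rule proj_ends_neutral)
    fix p1 p2 :: "('i \<times> bool) list"
    assume p: "p1 \<in> words 2" "p2 \<in> words 2"
    then have "length (y @ drop j (p1 @ mid @ p2)) = length y + (h + 4 - j)"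
      using assms(1) by (simp add: words_def)
    then have "odd (length (y @ drop j (p1 @ mid @ p2)))"
      using False by simp
    then have "(omega_coeff ((y @ drop j (p1 @ mid @ p2)) @ take t (test_word k) @ []) :: 'k) = 0"
      using assms(3,4) by (rule omega_coeff_test_word_misaligned)
    then show "G p1 p2 = 0"
      using G[OF p] by simp
  qed
qed

lemma proj_ends_window_even_shift:
  fixes f :: "('i::finite, 'k::field_char_0) tens"
  assumes "K + d = h + 4" "even d" "even s" "d \<le> s" "0 < s" "s \<le> 4 * k + d" "length mid = h"
  shows "proj_ends u1 u2 (\<lambda>p1 p2. window_term K f s (p1 @ mid @ p2 @ test_word k)) = 0"
proof (rule proj_ends_omega0_left[where H = "\<lambda>p2.
    f (take K (drop (s - 2) (mid @ p2 @ test_word k))) *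
    omega_coeff (drop (s - d) (test_word k :: ('i \<times> bool) list)) *
    omega_coeff (take (s - 2) (mid @ p2 @ test_word k))"])
  fix p1 p2 :: "('i \<times> bool) list"
  assume "p1 \<in> words 2" "p2 \<in> words 2"
  then have len: "length p1 = 2" "length p2 = 2"
    by (auto simp: words_def)
  define R where "R = (test_word k :: ('i \<times> bool) list)"
  define r where "r = mid @ p2 @ R"
  have s2: "2 \<le> s"
    using assms(3,5) by presburger
  have even: "even (length (drop (s - d) R))"
    using assms(2,3,6) by (simp add: R_def)
  have "window_term K f s (p1 @ r) =
      f (take K (drop s (p1 @ r))) * omega_coeff (drop (s - d) R @ take s (p1 @ r))"
    using assms len
    by (intro window_term_split[where v = "p1 @ mid @ p2" and R = R]) (simp_all add: r_def R_def)
  also have "\<dots> = f (take K (drop (s - 2) r)) * omega_coeff (drop (s - d) R @ p1 @ take (s - 2) r)"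
    using len s2 by simp
  also have "\<dots> = omega0 p1 *
      (f (take K (drop (s - 2) r)) * omega_coeff (drop (s - d) R) * omega_coeff (take (s - 2) r))"
    by (simp add: omega_coeff_append_pair[OF even len(1)] mult_ac)
  finally show "window_term K f s (p1 @ mid @ p2 @ test_word k) = omega0 p1 *
      (f (take K (drop (s - 2) (mid @ p2 @ test_word k))) *
        omega_coeff (drop (s - d) (test_word k :: ('i \<times> bool) list)) *
        omega_coeff (take (s - 2) (mid @ p2 @ test_word k)))"
    unfolding r_def R_def .
qed

lemma proj_ends_window_odd_shift:
  fixes f :: "('i::finite, 'k::field_char_0) tens"
  assumes "K + d = h + 4" "even d" "odd s" "d \<le> s" "s + 2 \<le> 4 * k + d" "length mid = h"
  shows "proj_ends u1 u2 (\<lambda>p1 p2. window_term K f s (p1 @ mid @ p2 @ test_word k)) = 0"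
proof (rule proj_ends_neutral)
  fix p1 p2 :: "('i \<times> bool) list"
  assume "p1 \<in> words 2" "p2 \<in> words 2"
  define w where "w = p1 @ mid @ p2 @ test_word k"
  have "window_term K f s w =
      f (take K (drop s w)) * omega_coeff (drop (s - d) (test_word k) @ take s w)"
    using assms \<open>p1 \<in> words 2\<close> \<open>p2 \<in> words 2\<close>
    by (intro window_term_split[where v = "p1 @ mid @ p2"]) (simp_all add: w_def words_def)
  moreover have "(omega_coeff (drop (s - d) (test_word k) @ take s w) :: 'k) = 0"
    using assms by (intro omega_coeff_drop_test_word_odd) simp_all
  ultimately show "window_term K f s (p1 @ mid @ p2 @ test_word k) = 0"
    by (simp add: w_def)
qed

lemma proj_ends_window_last_letter:
  fixes f :: "('i::finite, 'k::field_char_0) tens"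
  assumes "K + d = h + 4" "s = 4 * k + d - 1" "h + 10 \<le> 4 * k" "length mid = h"
  shows "proj_ends u1 u2 (\<lambda>p1 p2. window_term K f s (p1 @ mid @ p2 @ test_word k)) = 0"
proof -
  define R where "R = (test_word k :: ('i \<times> bool) list)"
  define c where "c = f (take K (drop (s - (h + 4)) R))"
  have "drop (s - d) R = [test_letter (4 * k - 1)]"
    using assms by (simp add: R_def drop_test_word upt_conv_Cons)
  then have split: "window_term K f s (v @ R) =
      c * omega_coeff ([test_letter (4 * k - 1)] @ drop 0 v @ take (s - (h + 4)) R)"
    if "length v = h + 4" for v
    using window_term_split[of "v @ R" v R K d s f] that assms by (simp add: R_def c_def)
  show ?thesis
  proof (rule proj_ends_window_through_test_word[where j = 0 and y = "[test_letter (4 * k - 1)]"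
        and t = "s - (h + 4)" and g = "\<lambda>_. c"])
    fix p1 p2 :: "('i \<times> bool) list"
    assume "p1 \<in> words 2" "p2 \<in> words 2"
    then show "window_term K f s (p1 @ mid @ p2 @ test_word k) = c * omega_coeff
        ([test_letter (4 * k - 1)] @ drop 0 (p1 @ mid @ p2) @ take (s - (h + 4)) (test_word k))"
      using split[of "p1 @ mid @ p2"] assms(4) by (simp add: R_def words_def)
  qed (use assms in simp_all)
qed

lemma proj_ends_window_wrap:
  fixes f :: "('i::finite, 'k::field_char_0) tens"
  assumes "K + d = h + 4" "4 * k + d < s" "s < h + 4 + 4 * k" "h + 10 \<le> 4 * k" "length mid = h"
  shows "proj_ends u1 u2 (\<lambda>p1 p2. window_term K f s (p1 @ mid @ p2 @ test_word k)) = 0"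
proof -
  define R where "R = (test_word k :: ('i \<times> bool) list)"
  have wrap: "window_term K f s (v @ R) =
      f (drop (s - (h + 4)) R @ take (s - 4 * k - d) v) *
      omega_coeff ([] @ drop (s - 4 * k - d) v @ take (s - (h + 4)) R)"
    if "length v = h + 4" for v
    using window_term_wrap[of "v @ R" v R K d s f] that assms by (simp add: R_def)
  show ?thesis
  proof (rule proj_ends_window_through_test_word[where j = "s - 4 * k - d" and y = "[]"
        and t = "s - (h + 4)" and g = "\<lambda>x. f (drop (s - (h + 4)) R @ x)"])
    fix p1 p2 :: "('i \<times> bool) list"
    assume "p1 \<in> words 2" "p2 \<in> words 2"
    then show "window_term K f s (p1 @ mid @ p2 @ test_word k) =
        f (drop (s - (h + 4)) R @ take (s - 4 * k - d) (p1 @ mid @ p2)) *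
        omega_coeff ([] @ drop (s - 4 * k - d) (p1 @ mid @ p2) @ take (s - (h + 4)) (test_word k))"
      using wrap[of "p1 @ mid @ p2"] assms(5) by (simp add: R_def words_def)
  qed (use assms in auto)
qed

lemma proj_ends_window_start:
  fixes f :: "('i::finite, 'k::field_char_0) tens"
  assumes "s \<le> 1" "length mid = h" "3 \<le> k"
  shows "proj_ends u1 u2 (\<lambda>p1 p2. window_term (h + 2) f s (p1 @ mid @ p2 @ test_word k)) = 0"
proof (cases s)
  case 0
  show ?thesis
  proof (rule proj_ends_omega0_right[where H = "\<lambda>p1. f (p1 @ mid) *
      omega_coeff (test_word k :: ('i \<times> bool) list)"])
    fix p1 p2 :: "('i \<times> bool) list"
    assume "p1 \<in> words 2" "p2 \<in> words 2"
    then obtain x y x' y' where "p1 = [x, y]" "p2 = [x', y']"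
      by (auto simp: in_words_2_iff)
    then show "window_term (h + 2) f s (p1 @ mid @ p2 @ test_word k) =
        f (p1 @ mid) * omega_coeff (test_word k :: ('i \<times> bool) list) * omega0 p2"
      using 0 assms(2) by (simp add: window_term_def)
  qed
next
  case (Suc n)
  then have s: "s = 1"
    using assms(1) by simp
  show ?thesis
  proof (rule proj_ends_neutral)
    fix p1 p2 :: "('i \<times> bool) list"
    assume "p1 \<in> words 2" "p2 \<in> words 2"
    then obtain x y x' y' where "p1 = [x, y]" "p2 = [x', y']"
      by (auto simp: in_words_2_iff)
    then have "drop (h + 2) (rotate s (p1 @ mid @ p2 @ test_word k)) =
        [y'] @ take (4 * k) (test_word k) @ [x]"
      using s assms(2) by simp
    moreover have "(omega_coeff ([y'] @ take (4 * k) (test_word k) @ [x]) :: 'k) = 0"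
      by (rule omega_coeff_test_word_misaligned) (use assms(3) in simp_all)
    ultimately show "window_term (h + 2) f s (p1 @ mid @ p2 @ test_word k) = 0"
      by (simp add: window_term_def)
  qed
qed

lemma proj_ends_window_term_eq_0:
  fixes f :: "('i::finite, 'k::field_char_0) tens"
  assumes "K = h + 2 \<or> K = h + 4 \<and> 0 < s" "s < h + 4 + 4 * k" "h + 10 \<le> 4 * k"
    "length mid = h"
  shows "proj_ends u1 u2 (\<lambda>p1 p2. window_term K f s (p1 @ mid @ p2 @ test_word k)) = 0"
proof -
  define d where "d = h + 4 - K"
  have d: "K + d = h + 4" "even d"
    using assms(1) by (auto simp: d_def)
  show ?thesis
  proof (cases "s < d")
    case True
    then have "K = h + 2" "s \<le> 1" "3 \<le> k"
      using assms(1,3) by (auto simp: d_def)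
    then show ?thesis
      using proj_ends_window_start[of s mid h k u1 u2 f] assms(4) by simp
  next
    case False
    then have s: "d \<le> s" "0 < s"
      using assms(1) by (auto simp: d_def)
    show ?thesis
    proof (cases "4 * k + d < s")
      case True
      then show ?thesis
        by (intro proj_ends_window_wrap[OF d(1)]) (use assms(2-4) in simp_all)
    next
      case False
      show ?thesis
      proof (cases "even s")
        case True
        then show ?thesis
          using False s by (intro proj_ends_window_even_shift[OF d]) (use assms(4) in simp_all)
      next
        case odd: False
        show ?thesis
        proof (cases "s + 2 \<le> 4 * k + d")
          case True
          then show ?thesis
            using odd s by (intro proj_ends_window_odd_shift[OF d]) (use assms(4) in simp_all)
        next
          case False
          then have "s = 4 * k + d - 1"
            using odd \<open>\<not> 4 * k + d < s\<close> d(2) by presburger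
          then show ?thesis
            by (intro proj_ends_window_last_letter[OF d(1)]) (use assms(3,4) in simp_all)
        qed
      qed
    qed
  qed
qed

lemma cyclic_sum_window_terms:
  assumes "a \<in> hom (h + 4)" "b \<in> hom (h + 2)" "length w = h + 4 + 4 * k"
  shows "cyclic_sum (\<lambda>w. tmul a (tpow omega0 (2 * k)) w + tmul b (tpow omega0 (2 * k + 1)) w) w =
    (\<Sum>s<h + 4 + 4 * k. window_term (h + 4) a s w + window_term (h + 2) b s w)"
proof -
  have "cyclic_sum (tmul a (tpow omega0 (2 * k))) w = (\<Sum>s<h + 4 + 4 * k. window_term (h + 4) a s w)"
    using cyclic_sum_tmul_tpow_omega0[OF assms(1), of w "2 * k"] assms(3) by simp
  moreover have "cyclic_sum (tmul b (tpow omega0 (2 * k + 1))) w =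
      (\<Sum>s<h + 4 + 4 * k. window_term (h + 2) b s w)"
    using cyclic_sum_tmul_tpow_omega0[OF assms(2), of w "2 * k + 1"] assms(3) by simp
  ultimately show ?thesis
    by (simp only: cyclic_sum_add sum.distrib)
qed

lemma proj_ends_cyclic_sum:
  fixes a b :: "('i::finite, 'k::field_char_0) tens"
  assumes "Q_at_ends a" "a \<in> hom (h + 4)" "b \<in> hom (h + 2)" "u1 \<in> words 2" "u2 \<in> words 2"
    "length mid = h" "h + 10 \<le> 4 * k"
  shows "proj_ends u1 u2 (\<lambda>p1 p2. cyclic_sum
      (\<lambda>w. tmul a (tpow omega0 (2 * k)) w + tmul b (tpow omega0 (2 * k + 1)) w)
      (p1 @ mid @ p2 @ test_word k)) = (-1) ^ k * a (u1 @ mid @ u2)"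
proof -
  let ?n = "h + 4 + 4 * k"
  let ?A = "\<lambda>s p1 p2. window_term (h + 4) a s (p1 @ mid @ p2 @ test_word k)"
  let ?B = "\<lambda>s p1 p2. window_term (h + 2) b s (p1 @ mid @ p2 @ test_word k)"
  have "proj_ends u1 u2 (\<lambda>p1 p2. cyclic_sum
      (\<lambda>w. tmul a (tpow omega0 (2 * k)) w + tmul b (tpow omega0 (2 * k + 1)) w)
      (p1 @ mid @ p2 @ test_word k)) = proj_ends u1 u2 (\<lambda>p1 p2. \<Sum>s<?n. ?A s p1 p2 + ?B s p1 p2)"
    by (rule proj_ends_cong, rule cyclic_sum_window_terms)
      (use assms(2,3,6) in \<open>simp_all add: words_def\<close>)
  also have "\<dots> = (\<Sum>s<?n. proj_ends u1 u2 (?A s) + proj_ends u1 u2 (?B s))"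
    by (simp only: proj_ends_add proj_ends_sum)
  also have "\<dots> = (\<Sum>s<?n. if s = 0 then proj_ends u1 u2 (?A 0) else 0)"
  proof (rule sum.cong)
    fix s
    assume "s \<in> {..<?n}"
    then have "s < ?n"
      by simp
    then have "proj_ends u1 u2 (?B s) = 0" "s \<noteq> 0 \<Longrightarrow> proj_ends u1 u2 (?A s) = 0"
      using assms(6,7) by (auto intro!: proj_ends_window_term_eq_0)
    then show "proj_ends u1 u2 (?A s) + proj_ends u1 u2 (?B s) =
        (if s = 0 then proj_ends u1 u2 (?A 0) else 0)"
      by (cases "s = 0") simp_all
  qed simp
  also have "\<dots> = proj_ends u1 u2 (?A 0)"
    by simp
  also have "\<dots> = proj_ends u1 u2 (\<lambda>p1 p2. (-1) ^ k * a (p1 @ mid @ p2))"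
  proof (rule proj_ends_cong)
    fix p1 p2 :: "('i \<times> bool) list"
    assume "p1 \<in> words 2" "p2 \<in> words 2"
    then show "?A 0 p1 p2 = (-1) ^ k * a (p1 @ mid @ p2)"
      using assms(6) by (simp add: window_term_def words_def omega_coeff_test_word)
  qed
  also have "\<dots> = (-1) ^ k * a (u1 @ mid @ u2)"
    using assms(1,4,5) by (simp add: proj_ends_cmult proj_ends_Q_at_ends)
  finally show ?thesis .
qed

theorem proposition5p2:
  fixes a b :: "('i::finite, 'k::field_char_0) tens"
    and m :: nat
  assumes "m \<ge> 4"
    and "a \<in> QVQ m"
    and "b \<in> hom (m - 2)"
    and "\<exists>p\<ge>1. \<forall>l\<ge>p. cyc_zero (\<lambda>w. tmul a (tpow omega0 l) w + tmul b (tpow omega0 (l + 1)) w)"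
  shows "a = (\<lambda>w. 0)"
proof -
  obtain p where p: "\<forall>l\<ge>p. cyc_zero (\<lambda>w. tmul a (tpow omega0 l) w + tmul b (tpow omega0 (l + 1)) w)"
    using assms(4) by blast
  define h where "h = m - 4"
  define k where "k = p + m + 10"
  have m: "m = h + 4" "m - 2 = h + 2" and k: "h + 10 \<le> 4 * k" "p \<le> 2 * k"
    using assms(1) by (simp_all add: h_def k_def)
  have hom: "a \<in> hom m"
    using assms(1,2) by (simp add: QVQ_in_hom)
  have "a u = 0" if "length u = m" for u
  proof -
    have u: "u = take 2 u @ take h (drop 2 u) @ drop (h + 2) u"
      by (metis append_take_drop_id drop_drop add.commute)
    have "(-1) ^ k * a (take 2 u @ take h (drop 2 u) @ drop (h + 2) u) =
        proj_ends (take 2 u) (drop (h + 2) u) (\<lambda>p1 p2. cyclic_sum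
          (\<lambda>w. tmul a (tpow omega0 (2 * k)) w + tmul b (tpow omega0 (2 * k + 1)) w)
          (p1 @ take h (drop 2 u) @ p2 @ test_word k))"
      using that m k assms(3) hom QVQ_Q_at_ends[OF assms(2)]
      by (intro proj_ends_cyclic_sum[symmetric]) (simp_all add: words_def)
    also have "\<dots> = 0"
      using p k by (simp add: proj_ends_def cyclic_sum_cyc_zero)
    finally show ?thesis
      using u by simp
  qed
  with hom show ?thesis
    by (auto simp: hom_def)
qed

end
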